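(* For every algebra $A$, the anti-rotor $\mathfrak{u}_A$ has dimension at least $1$.
   Context: An "algebra" is a real finite-dimensional unital associative algebra with underlying vector space $\mathbb{R}^n$ ($n\ge1$), standard basis, elements column vectors $s=(x_1,\dots,x_n)^T$, $\mathbf{d}s=(dx_1,\dots,dx_n)^T$. An uncurling metric of $A$ is a real symmetric $n\times n$ matrix $L$ with $d\big((s^{-1})^TL\,\mathbf{d}s\big)=0$ on an open ball centered at $\mathbf{1}_A$ consisting only of units; the anti-rotor $\mathfrak{u}_A$ is the real vector space of all uncurling metrics of $A$. *)

theory Defs
  imports "HOL-Analysis.Analysis"
begin

definition is_algebra :: "(real^'n \<Rightarrow> real^'n \<Rightarrow> real^'n) \<Rightarrow> real^'n \<Rightarrow> bool" where
  "is_algebra m e \<longleftrightarrow> bilinear m \<and> (\<forall>x y z. m (m x y) z = m x (m y z)) \<and> (\<forall>x. m e x = x \<and> m x e = x)"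

definition alg_unit :: "(real^'n \<Rightarrow> real^'n \<Rightarrow> real^'n) \<Rightarrow> real^'n \<Rightarrow> real^'n \<Rightarrow> bool" where
  "alg_unit m e s \<longleftrightarrow> (\<exists>t. m s t = e \<and> m t s = e)"

definition alg_inv :: "(real^'n \<Rightarrow> real^'n \<Rightarrow> real^'n) \<Rightarrow> real^'n \<Rightarrow> real^'n \<Rightarrow> real^'n" where
  "alg_inv m e s = (THE t. m s t = e \<and> m t s = e)"

text \<open>The 1-form sum_j f_j(s) dx_j (coefficient vector f) is closed on U:
  f is differentiable at each point of U and d_i f_j = d_j f_i.\<close>
definition closed_one_form :: "(real^'n \<Rightarrow> real^'n) \<Rightarrow> (real^'n) set \<Rightarrow> bool" where
  "closed_one_form f U \<longleftrightarrow> (\<forall>s\<in>U. \<exists>D. (f has_derivative D) (at s) \<and>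
      (\<forall>i j. D (axis i 1) $ j = D (axis j 1) $ i))"

text \<open>(s^{-1})^T L ds has coefficient vector s^{-1} v* L.\<close>
definition uncurling_metric :: "(real^'n \<Rightarrow> real^'n \<Rightarrow> real^'n) \<Rightarrow> real^'n \<Rightarrow> real^'n^'n \<Rightarrow> bool" where
  "uncurling_metric m e L \<longleftrightarrow> transpose L = L \<and>
     (\<exists>r>0. ball e r \<subseteq> {s. alg_unit m e s} \<and>
        closed_one_form (\<lambda>s. alg_inv m e s v* L) (ball e r))"

definition anti_rotor :: "(real^'n \<Rightarrow> real^'n \<Rightarrow> real^'n) \<Rightarrow> real^'n \<Rightarrow> (real^'n^'n) set" where
  "anti_rotor m e = {L. uncurling_metric m e L}"

end

theory Submission
  imports Defs
begin

text \<open>The witness is the trace form \<open>L\<^sub>i\<^sub>j = tr(\<lambda>x. e\<^sub>i e\<^sub>j x)\<close>, symmetric because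
  \<open>tr(ab) = tr(ba)\<close> for left multiplications, and nonzero because \<open>tr(1) = n\<close>. The differential
  of \<open>s \<mapsto> s\<^sup>-\<^sup>1\<close> is \<open>h \<mapsto> -s\<^sup>-\<^sup>1 h s\<^sup>-\<^sup>1\<close>, so the Jacobian of the coefficient vector of
  \<open>(s\<^sup>-\<^sup>1)\<^sup>T L ds\<close> has entries \<open>-tr(s\<^sup>-\<^sup>1 e\<^sub>i s\<^sup>-\<^sup>1 e\<^sub>j)\<close>, again symmetric in \<open>i, j\<close> by
  cyclicity of the trace.\<close>

lemma linear_eq_sum_axis:
  fixes f :: "real^'n \<Rightarrow> real"
  assumes "linear f"
  shows "f x = (\<Sum>i\<in>UNIV. x $ i * f (axis i 1))"
proof -
  have "f x = f (\<Sum>i\<in>UNIV. x $ i *\<^sub>R axis i 1)"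
    using basis_expansion[of x] by (simp add: scalar_mult_eq_scaleR)
  also have "\<dots> = (\<Sum>i\<in>UNIV. x $ i * f (axis i 1))"
    by (simp add: linear_sum[OF assms] linear_scale[OF assms])
  finally show ?thesis .
qed

lemma vector_matrix_mult_form_matrix:
  fixes B :: "real^'n \<Rightarrow> real^'n \<Rightarrow> real"
  assumes "\<And>y. linear (\<lambda>x. B x y)"
  shows "x v* (\<chi> i j. B (axis i 1) (axis j 1)) = (\<chi> j. B x (axis j 1))"
  by (auto simp: vec_eq_iff vector_matrix_mult_def intro: linear_eq_sum_axis[OF assms, symmetric])

lemma bounded_linear_vector_matrix_mult: "bounded_linear (\<lambda>x. x v* A)"
  for A :: "real^'n^'m"
  by (simp flip: transpose_matrix_vector)

definition trace_form :: "(real^'n \<Rightarrow> real^'n \<Rightarrow> real^'n) \<Rightarrow> real^'n \<Rightarrow> real" where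
  "trace_form m x = trace (matrix (m x))"

definition trace_metric :: "(real^'n \<Rightarrow> real^'n \<Rightarrow> real^'n) \<Rightarrow> real^'n^'n" where
  "trace_metric m = (\<chi> i j. trace_form m (m (axis i 1) (axis j 1)))"

locale unital_algebra =
  fixes m :: "real^'n \<Rightarrow> real^'n \<Rightarrow> real^'n" and e :: "real^'n"
  assumes algebra: "is_algebra m e"
begin

lemma bilinear: "bilinear m"
  using algebra by (simp add: is_algebra_def)

lemma assoc: "m (m x y) z = m x (m y z)"
  using algebra by (simp add: is_algebra_def)

lemma left_unit [simp]: "m e x = x"
  using algebra by (simp add: is_algebra_def)

lemma right_unit [simp]: "m x e = x"
  using algebra by (simp add: is_algebra_def)

lemma bounded_bilinear: "bounded_bilinear m"
  using bilinear bilinear_conv_bounded_bilinear by blast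

lemma linear_mult_left: "linear (m x)"
  using bilinear by (simp add: bilinear_def)

lemma linear_mult_right: "linear (\<lambda>x. m x y)"
  using bilinear by (simp add: bilinear_def)

lemma alg_inv_eqI:
  assumes "m s t = e" "m t s = e"
  shows "alg_inv m e s = t"
  unfolding alg_inv_def
proof (rule the_equality)
  fix t' assume t': "m s t' = e \<and> m t' s = e"
  have "t' = m (m t' s) t"
    using assms(1) by (simp add: assoc)
  also have "\<dots> = t"
    using t' by simp
  finally show "t' = t" .
qed (use assms in simp)

lemma
  assumes "alg_unit m e s"
  shows alg_inv_right: "m s (alg_inv m e s) = e"
    and alg_inv_left: "m (alg_inv m e s) s = e"
  using assms alg_inv_eqI unfolding alg_unit_def by auto

lemma alg_unit_iff_det: "alg_unit m e s \<longleftrightarrow> det (matrix (m s)) \<noteq> 0"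
proof
  assume "alg_unit m e s"
  then have "inj (m s)"
    by (metis alg_inv_left assoc injI left_unit)
  then show "det (matrix (m s)) \<noteq> 0"
    using det_nz_iff_inj[OF linear_mult_left] by blast
next
  assume "det (matrix (m s)) \<noteq> 0"
  then have inj: "inj (m s)"
    using det_nz_iff_inj[OF linear_mult_left] by blast
  then obtain t where t: "m s t = e"
    using linear_inj_imp_surj[OF linear_mult_left] by (metis surjD)
  then have "m s (m t s) = m s e"
    by (simp flip: assoc)
  then have "m t s = e"
    using inj by (meson injD)
  with t show "alg_unit m e s"
    unfolding alg_unit_def by auto
qed

lemma open_units: "open {s. alg_unit m e s}"
proof -
  have "continuous_on UNIV (\<lambda>s. det (matrix (m s)))"
    unfolding det_def matrix_def
    by (intro continuous_intros linear_continuous_on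
        bounded_bilinear.bounded_linear_left[OF bounded_bilinear])
  then show ?thesis
    unfolding alg_unit_iff_det by (rule open_Collect_neq) simp
qed

lemma has_derivative_alg_inv:
  assumes s: "alg_unit m e s"
  shows "(alg_inv m e has_derivative (\<lambda>h. - m (alg_inv m e s) (m h (alg_inv m e s)))) (at s)"
proof -
  define u where "u = alg_inv m e s"
  text \<open>Inverse function theorem for \<open>F(z, t) = (z, z t)\<close>: its local inverse
    \<open>G(z, w) = (z, z\<^sup>-\<^sup>1 w)\<close> recovers the algebra inverse as \<open>z\<^sup>-\<^sup>1 = snd (G (z, 1))\<close>.\<close>
  define F where "F = (\<lambda>x. (fst x, m (fst x) (snd x)))"
  define G where "G = (\<lambda>y. (fst y, m (alg_inv m e (fst y)) (snd y)))"
  define F' where "F' = (\<lambda>h. (fst h, m s (snd h) + m (fst h) u))"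
  define G' where "G' = (\<lambda>k. (fst k, m u (snd k - m (fst k) u)))"
  have F: "(F has_derivative F') (at (s, u))"
    unfolding F_def F'_def
    by (auto intro!: derivative_eq_intros bounded_bilinear.FDERIV[OF bounded_bilinear])
  have "continuous_on ({s. alg_unit m e s} \<times> UNIV) F"
    unfolding F_def
    by (intro continuous_intros bounded_bilinear.continuous_on[OF bounded_bilinear])
  moreover have "G (F x) = x" if "x \<in> {s. alg_unit m e s} \<times> UNIV" for x
    using that by (auto simp: F_def G_def alg_inv_left simp flip: assoc)
  moreover have "F' \<circ> G' = id"
    using s by (auto simp: F'_def G'_def u_def alg_inv_right bilinear_rsub[OF bilinear]
        simp flip: assoc)
  ultimately have "(G has_derivative G') (at (F (s, u)))"
    using has_derivative_inverse_strong[OF open_Times[OF open_units open_UNIV] _ _ _ F] s by auto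
  moreover have "F (s, u) = (s, e)"
    using s by (simp add: F_def u_def alg_inv_right)
  ultimately have G: "(G has_derivative G') (at (s, e))"
    by simp
  have "((\<lambda>z. (z, e)) has_derivative (\<lambda>h. (h, 0))) (at s)"
    by (auto intro!: derivative_eq_intros)
  from has_derivative_snd[OF has_derivative_compose[OF this G]]
  have "((\<lambda>z. snd (G (z, e))) has_derivative (\<lambda>h. snd (G' (h, 0)))) (at s)" .
  moreover have "(\<lambda>z. snd (G (z, e))) = alg_inv m e"
    by (simp add: G_def)
  moreover have "snd (G' (h, 0)) = - m u (m h u)" for h
    by (simp add: G'_def bilinear_rneg[OF bilinear])
  ultimately show ?thesis
    by (simp add: u_def)
qed

lemma matrix_mult_hom: "matrix (m (m a b)) = matrix (m a) ** matrix (m b)"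
proof -
  have "m (m a b) = m a \<circ> m b"
    by (simp add: fun_eq_iff assoc)
  then show ?thesis
    by (simp add: matrix_compose[OF linear_mult_left linear_mult_left])
qed

lemma trace_form_commute: "trace_form m (m a b) = trace_form m (m b a)"
  unfolding trace_form_def matrix_mult_hom by (rule trace_mul_sym)

lemma linear_trace_form: "linear (trace_form m)"
proof (rule linearI)
  fix x y :: "real^'n" and c :: real
  show "trace_form m (x + y) = trace_form m x + trace_form m y"
    by (simp add: trace_form_def trace_def matrix_def bilinear_ladd[OF bilinear] sum.distrib)
  show "trace_form m (c *\<^sub>R x) = c *\<^sub>R trace_form m x"
    by (simp add: trace_form_def trace_def matrix_def bilinear_lmul[OF bilinear] sum_distrib_left)
qed

lemma vector_matrix_mult_trace_metric:
  "x v* trace_metric m = (\<chi> j. trace_form m (m x (axis j 1)))"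
  unfolding trace_metric_def
  by (rule vector_matrix_mult_form_matrix)
    (simp add: linear_compose[OF linear_mult_right linear_trace_form, unfolded o_def])

lemma trace_metric_symmetric: "transpose (trace_metric m) = trace_metric m"
  by (simp add: trace_metric_def transpose_def trace_form_commute)

lemma trace_metric_nonzero: "trace_metric m \<noteq> 0"
proof
  assume "trace_metric m = 0"
  then have "(e v* trace_metric m) $ j = 0" for j
    by (simp add: vector_matrix_mult_def)
  then have "trace_form m (axis j 1) = 0" for j
    by (simp add: vector_matrix_mult_trace_metric)
  then have "trace_form m e = 0"
    by (simp add: linear_eq_sum_axis[OF linear_trace_form, of e])
  moreover have "m e = id"
    by (simp add: fun_eq_iff)
  then have "trace_form m e = real CARD('n)"
    by (simp add: trace_form_def matrix_id_mat_1 trace_I)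
  ultimately show False
    by simp
qed

lemma closed_one_form_trace_metric:
  "closed_one_form (\<lambda>s. alg_inv m e s v* trace_metric m) {s. alg_unit m e s}"
  unfolding closed_one_form_def
proof
  fix s assume "s \<in> {s. alg_unit m e s}"
  define u where "u = alg_inv m e s"
  define D where "D = (\<lambda>h. (- m u (m h u)) v* trace_metric m)"
  have "((\<lambda>s. alg_inv m e s v* trace_metric m) has_derivative D) (at s)"
    unfolding D_def u_def
    using bounded_linear.has_derivative[OF bounded_linear_vector_matrix_mult has_derivative_alg_inv]
      \<open>s \<in> _\<close> by simp
  moreover have "D (axis i 1) $ j = - trace_form m (m (m u (axis i 1)) (m u (axis j 1)))" for i j
    by (simp add: D_def vector_matrix_mult_trace_metric assoc bilinear_lneg[OF bilinear]
        linear_neg[OF linear_trace_form])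
  ultimately show "\<exists>D. ((\<lambda>s. alg_inv m e s v* trace_metric m) has_derivative D) (at s) \<and>
      (\<forall>i j. D (axis i 1) $ j = D (axis j 1) $ i)"
    by (metis trace_form_commute)
qed

lemma uncurling_trace_metric: "uncurling_metric m e (trace_metric m)"
proof -
  have "alg_unit m e e"
    by (auto simp: alg_unit_def)
  then obtain r where "r > 0" and r: "ball e r \<subseteq> {s. alg_unit m e s}"
    using open_units by (metis mem_Collect_eq open_contains_ball)
  moreover have "closed_one_form (\<lambda>s. alg_inv m e s v* trace_metric m) (ball e r)"
    using closed_one_form_trace_metric r by (auto simp: closed_one_form_def)
  ultimately show ?thesis
    unfolding uncurling_metric_def using trace_metric_symmetric by blast
qed

end

theorem corollary8p4:
  fixes m :: "real^'n \<Rightarrow> real^'n \<Rightarrow> real^'n" and e :: "real^'n"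
  assumes "is_algebra m e"
  shows "dim (anti_rotor m e) \<ge> 1"
proof -
  interpret unital_algebra m e
    using assms by (rule unital_algebra.intro)
  have "trace_metric m \<in> anti_rotor m e"
    using uncurling_trace_metric by (simp add: anti_rotor_def)
  with trace_metric_nonzero have "\<not> anti_rotor m e \<subseteq> {0}"
    by blast
  then have "dim (anti_rotor m e) \<noteq> 0"
    by simp
  then show ?thesis
    by linarith
qed

end
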